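(* Let $k$ be a natural number, $n=4k$, and let $|G\rangle$ be an $n$-qubit graph state whose graph has no isolated vertices. Let $\mathcal A$ be the set of stabilizers $S=(-1)^s\bigotimes_{i=1}^n\tau_i$ of $|G\rangle$ ($s\in\{0,1\}$) such that $\tau_i\in\{X,Y,Z\}$ for exactly $3k$ indices $i$ and $\tau_i=I$ for the remaining $k$ indices, and assume $\mathcal A\neq\emptyset$. Let $\rho=\mathcal E^{\otimes n}(|G\rangle\langle G|)$ with $\mathcal E$ the single-qubit depolarizing channel of error probability $p$. Then for every $S\in\mathcal A$, $F_{\rm est}:={\rm Tr}(\rho S)=(1-\tfrac43p)^{3k}$, and with $\tilde F:=(1-p)^{4k}$ (the fidelity $\langle G|\rho|G\rangle$ up to first order in $p$) one has $$0\le \tilde F-F_{\rm est}<\frac{2}{3k}\qquad\text{for all }0\le p\le 3/4.$$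
   Context: Graph state $|G\rangle=\big(\prod_{(i,j)\in E}CZ_{i,j}\big)|+\rangle^{\otimes n}$ with stabilizer generators $g_i=X_i\prod_{j:(i,j)\in E}Z_j$; a stabilizer is $S_\ell=\prod_i g_i^{\ell_i}$, $\ell\in\{0,1\}^n$, which equals $(-1)^s\bigotimes_{i=1}^n\tau_i$ with $\tau_i\in\{I,X,Y,Z\}$. The depolarizing channel is $\mathcal E(\cdot)=(1-p)(\cdot)+\frac p3[X(\cdot)X+Y(\cdot)Y+Z(\cdot)Z]$, applied independently to each qubit. *)

theory Defs
  imports Complex_Main "Jordan_Normal_Form.Matrix"
begin

datatype pauli = PI | PX | PY | PZ

definition pauli_mat :: "pauli \<Rightarrow> complex mat" where
  "pauli_mat P = (case P of
      PI \<Rightarrow> mat_of_rows_list 2 [[1, 0], [0, 1]]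
    | PX \<Rightarrow> mat_of_rows_list 2 [[0, 1], [1, 0]]
    | PY \<Rightarrow> mat_of_rows_list 2 [[0, -\<i>], [\<i>, 0]]
    | PZ \<Rightarrow> mat_of_rows_list 2 [[1, 0], [0, -1]])"

section \<open>n-qubit operators: computational basis index a < 2^n, bit i of a is qubit i\<close>

definition qbit :: "nat \<Rightarrow> nat \<Rightarrow> nat" where
  "qbit a i = (a div 2 ^ i) mod 2"

definition pauli_tensor :: "nat \<Rightarrow> (nat \<Rightarrow> pauli) \<Rightarrow> complex mat" where
  "pauli_tensor n tau = mat (2 ^ n) (2 ^ n)
     (\<lambda>(a, b). \<Prod>i<n. pauli_mat (tau i) $$ (qbit a i, qbit b i))"

definition pauli_at :: "nat \<Rightarrow> nat \<Rightarrow> pauli \<Rightarrow> complex mat" where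
  "pauli_at n i P = pauli_tensor n (\<lambda>j. if j = i then P else PI)"

definition simple_graph :: "nat \<Rightarrow> (nat \<Rightarrow> nat \<Rightarrow> bool) \<Rightarrow> bool" where
  "simple_graph n E \<longleftrightarrow> (\<forall>i j. E i j \<longrightarrow> i < n \<and> j < n) \<and> (\<forall>i j. E i j \<longrightarrow> E j i)
      \<and> (\<forall>i. \<not> E i i)"

definition no_isolated_vertices :: "nat \<Rightarrow> (nat \<Rightarrow> nat \<Rightarrow> bool) \<Rightarrow> bool" where
  "no_isolated_vertices n E \<longleftrightarrow> (\<forall>i<n. \<exists>j<n. E i j)"

definition cz :: "nat \<Rightarrow> nat \<Rightarrow> nat \<Rightarrow> complex mat" where
  "cz n i j = mat (2 ^ n) (2 ^ n)
     (\<lambda>(a, b). if a = b then (if qbit a i = 1 \<and> qbit a j = 1 then -1 else 1) else 0)"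

definition plus_state :: "nat \<Rightarrow> complex vec" where
  "plus_state n = vec (2 ^ n) (\<lambda>_. complex_of_real (1 / sqrt (2 ^ n)))"

definition graph_edges :: "nat \<Rightarrow> (nat \<Rightarrow> nat \<Rightarrow> bool) \<Rightarrow> (nat \<times> nat) list" where
  "graph_edges n E = [(i, j). j \<leftarrow> [0..<n], i \<leftarrow> [0..<j], E i j]"

definition graph_state :: "nat \<Rightarrow> (nat \<Rightarrow> nat \<Rightarrow> bool) \<Rightarrow> complex vec" where
  "graph_state n E = foldr (\<lambda>(i, j) v. cz n i j *\<^sub>v v) (graph_edges n E) (plus_state n)"

definition graph_density :: "nat \<Rightarrow> (nat \<Rightarrow> nat \<Rightarrow> bool) \<Rightarrow> complex mat" where
  "graph_density n E = (let psi = graph_state n E in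
     mat (2 ^ n) (2 ^ n) (\<lambda>(a, b). psi $ a * cnj (psi $ b)))"

definition stab_gen :: "nat \<Rightarrow> (nat \<Rightarrow> nat \<Rightarrow> bool) \<Rightarrow> nat \<Rightarrow> complex mat" where
  "stab_gen n E i = pauli_tensor n (\<lambda>j. if j = i then PX else if E i j then PZ else PI)"

definition stabilizer :: "nat \<Rightarrow> (nat \<Rightarrow> nat \<Rightarrow> bool) \<Rightarrow> (nat \<Rightarrow> bool) \<Rightarrow> complex mat" where
  "stabilizer n E l = foldr (\<lambda>i M. (if l i then stab_gen n E i else 1\<^sub>m (2 ^ n)) * M)
      [0..<n] (1\<^sub>m (2 ^ n))"

definition weight_stabilizers :: "nat \<Rightarrow> (nat \<Rightarrow> nat \<Rightarrow> bool) \<Rightarrow> nat \<Rightarrow> complex mat set" where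
  "weight_stabilizers n E w = {S. (\<exists>l. S = stabilizer n E l) \<and>
      (\<exists>(s::nat) tau. s \<le> 1 \<and> S = ((-1) ^ s) \<cdot>\<^sub>m pauli_tensor n tau
         \<and> card {i. i < n \<and> tau i \<noteq> PI} = w)}"

definition mat_trace :: "complex mat \<Rightarrow> complex" where
  "mat_trace A = (\<Sum>i<dim_row A. A $$ (i, i))"

definition depol_qubit :: "nat \<Rightarrow> real \<Rightarrow> nat \<Rightarrow> complex mat \<Rightarrow> complex mat" where
  "depol_qubit n p i M =
     complex_of_real (1 - p) \<cdot>\<^sub>m M
     + complex_of_real (p / 3) \<cdot>\<^sub>m
        (pauli_at n i PX * M * pauli_at n i PX
         + pauli_at n i PY * M * pauli_at n i PY
         + pauli_at n i PZ * M * pauli_at n i PZ)"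

definition depol_all :: "nat \<Rightarrow> real \<Rightarrow> complex mat \<Rightarrow> complex mat" where
  "depol_all n p M = foldr (depol_qubit n p) [0..<n] M"

end

theory Submission
  imports Defs
begin

text \<open>
  Conjugating a Pauli string by a single-qubit Pauli matrix multiplies it by the sign +1 or -1 according
  as the two commute or anticommute. Moving the depolarizing channel onto the observable by cyclicity
  of the trace, each non-identity factor of S therefore picks up (1 - p) + (p/3)(1 - 1 - 1) = 1 - 4p/3
  and each identity factor picks up 1, so Tr(rho S) = (1 - 4p/3)^(3k) Tr(|G><G| S). The last trace is 1:
  in the computational basis g_i flips bit i, and the phase that X_i Z_N(i) produces on |G> is exactly the
  change of the CZ phases, so every g_i, hence every stabilizer, fixes |G>.

  For the bound put x = (1-p)^4 and y = (1-4p/3)^3. Then x - y = p^2 ((p - 22/27)^2 + 2/729) lies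
  between 0 and 2p^2/3, and x^k - y^k <= k x^(k-1) (x - y) <= 2/(3k) (kp)^2 e^(-4p(k-1)),
  where (kp)^2 e^(-4p(k-1)) < 1 because e^z > z^2/2.
\<close>

section \<open>Computational basis indices as bit strings\<close>

lemma qbit_eq_of_bool_bit: "qbit a i = of_bool (bit a i)"
  unfolding qbit_def by (simp add: bit_iff_odd odd_iff_mod_2_eq_one)

lemma qbit_less_2 [simp]: "qbit a i < 2"
  unfolding qbit_def by simp

lemma qbit_cases: "qbit a i = 0 \<or> qbit a i = 1"
  using qbit_less_2[of a i] by linarith

lemma qbit_eq_0_if_less_power:
  assumes "a < 2 ^ n" "n \<le> i"
  shows "qbit a i = 0"
proof -
  have "a < 2 ^ i"
    using assms by (meson order_less_le_trans one_le_numeral power_increasing)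
  then show ?thesis
    unfolding qbit_def by simp
qed

lemma qbit_add_power:
  assumes "a < 2 ^ n"
  shows "qbit (a + 2 ^ n) i = (if i < n then qbit a i else of_bool (i = n))"
proof -
  have "bit (a + 2 ^ n) i \<longleftrightarrow> bit a i \<or> i = n"
    using qbit_eq_0_if_less_power[OF assms]
    by (subst bit_disjunctive_add_iff) (auto simp: qbit_eq_of_bool_bit bit_exp_iff)
  then show ?thesis
    using qbit_eq_0_if_less_power[OF assms, of i] by (auto simp: qbit_eq_of_bool_bit)
qed

lemma sum_prod_qbits:
  fixes h :: "nat \<Rightarrow> nat \<Rightarrow> 'a::comm_semiring_1"
  shows "(\<Sum>a<2 ^ n. \<Prod>i<n. h i (qbit a i)) = (\<Prod>i<n. h i 0 + h i 1)"
proof (induction n)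
  case 0
  then show ?case by simp
next
  case (Suc n)
  let ?high = "(\<lambda>a. a + 2 ^ n) ` {..<(2::nat) ^ n}"
  have split: "{..<(2::nat) ^ Suc n} = {..<2 ^ n} \<union> ?high"
  proof -
    have "a \<in> ?high" if "2 ^ n \<le> a" "a < 2 ^ Suc n" for a :: nat
      using that by (intro image_eqI[of _ _ "a - 2 ^ n"]) auto
    then show ?thesis by (auto simp: not_less) (meson not_less)
  qed
  have "(\<Sum>a<2 ^ Suc n. \<Prod>i<Suc n. h i (qbit a i))
      = (\<Sum>a<2 ^ n. \<Prod>i<Suc n. h i (qbit a i)) + (\<Sum>a\<in>?high. \<Prod>i<Suc n. h i (qbit a i))"
    unfolding split by (rule sum.union_disjoint) auto
  also have "(\<Sum>a\<in>?high. \<Prod>i<Suc n. h i (qbit a i)) = (\<Sum>a<2 ^ n. \<Prod>i<Suc n. h i (qbit (a + 2 ^ n) i))"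
    by (subst sum.reindex) (auto simp: inj_on_def)
  also have "\<dots> = (\<Sum>a<2 ^ n. (\<Prod>i<n. h i (qbit a i)) * h n 1)"
    by (intro sum.cong refl) (auto simp: qbit_add_power intro!: prod.cong)
  also have "(\<Sum>a<2 ^ n. \<Prod>i<Suc n. h i (qbit a i)) = (\<Sum>a<2 ^ n. (\<Prod>i<n. h i (qbit a i)) * h n 0)"
    by (intro sum.cong refl) (auto simp: qbit_eq_0_if_less_power)
  finally show ?case
    using Suc by (simp add: sum_distrib_right[symmetric] distrib_left)
qed

lemma qbit_flip_bit: "qbit (flip_bit i a) j = (if j = i then 1 - qbit a i else qbit a j)"
  by (simp add: qbit_eq_of_bool_bit bit_flip_bit_iff)

lemma flip_bit_less_power:
  assumes "i < n" "a < 2 ^ n"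
  shows "flip_bit i a < (2::nat) ^ n"
  using assms by (simp add: take_bit_nat_eq_self_iff[symmetric] take_bit_flip_bit_eq)

lemma eq_if_qbits_eq:
  assumes "a < 2 ^ n" "b < 2 ^ n" "\<And>j. j < n \<Longrightarrow> qbit a j = qbit b j"
  shows "a = b"
proof (rule bit_eqI)
  fix j
  show "bit a j = bit b j"
    using assms(3)[of j] qbit_eq_0_if_less_power[OF assms(1), of j]
      qbit_eq_0_if_less_power[OF assms(2), of j]
    by (cases "j < n") (auto simp: qbit_eq_of_bool_bit of_bool_def split: if_splits)
qed

section \<open>Tensor products of single-qubit operators\<close>

definition tensor_prod :: "nat \<Rightarrow> (nat \<Rightarrow> 'a::comm_semiring_1 mat) \<Rightarrow> 'a mat" where
  "tensor_prod n F = mat (2 ^ n) (2 ^ n) (\<lambda>(a, b). \<Prod>i<n. F i $$ (qbit a i, qbit b i))"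

lemma tensor_prod_carrier [simp]: "tensor_prod n F \<in> carrier_mat (2 ^ n) (2 ^ n)"
  and dim_row_tensor_prod [simp]: "dim_row (tensor_prod n F) = 2 ^ n"
  and dim_col_tensor_prod [simp]: "dim_col (tensor_prod n F) = 2 ^ n"
  by (auto simp: tensor_prod_def)

lemma index_tensor_prod [simp]:
  "a < 2 ^ n \<Longrightarrow> b < 2 ^ n \<Longrightarrow> tensor_prod n F $$ (a, b) = (\<Prod>i<n. F i $$ (qbit a i, qbit b i))"
  by (simp add: tensor_prod_def)

lemma index_mult_mat_2:
  assumes "A \<in> carrier_mat 2 2" "B \<in> carrier_mat 2 2" "x < 2" "y < 2"
  shows "(A * B) $$ (x, y) = A $$ (x, 0) * B $$ (0, y) + A $$ (x, 1) * B $$ (1, y)"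
  using assms by (simp add: scalar_prod_def numeral_2_eq_2)

lemma tensor_prod_mult:
  assumes "\<And>i. i < n \<Longrightarrow> F i \<in> carrier_mat 2 2" "\<And>i. i < n \<Longrightarrow> G i \<in> carrier_mat 2 2"
  shows "tensor_prod n F * tensor_prod n G = tensor_prod n (\<lambda>i. F i * G i)"
proof (rule eq_matI)
  fix a b
  assume "a < dim_row (tensor_prod n (\<lambda>i. F i * G i))" "b < dim_col (tensor_prod n (\<lambda>i. F i * G i))"
  then have a: "a < 2 ^ n" and b: "b < 2 ^ n" by auto
  have "(tensor_prod n F * tensor_prod n G) $$ (a, b)
      = (\<Sum>c<2 ^ n. \<Prod>i<n. F i $$ (qbit a i, qbit c i) * G i $$ (qbit c i, qbit b i))"
    using a b by (simp add: scalar_prod_def lessThan_atLeast0 prod.distrib)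
  also have "\<dots> = (\<Prod>i<n. F i $$ (qbit a i, 0) * G i $$ (0, qbit b i)
                          + F i $$ (qbit a i, 1) * G i $$ (1, qbit b i))"
    by (rule sum_prod_qbits)
  also have "\<dots> = (\<Prod>i<n. (F i * G i) $$ (qbit a i, qbit b i))"
    using assms by (intro prod.cong refl) (simp add: index_mult_mat_2)
  finally show "(tensor_prod n F * tensor_prod n G) $$ (a, b) = tensor_prod n (\<lambda>i. F i * G i) $$ (a, b)"
    using a b by simp
qed auto

lemma tensor_prod_smult_factor:
  assumes "i < n" "F i \<in> carrier_mat 2 2"
  shows "tensor_prod n (F(i := c \<cdot>\<^sub>m F i)) = c \<cdot>\<^sub>m tensor_prod n F"
proof (rule eq_matI)
  fix a b
  assume "a < dim_row (c \<cdot>\<^sub>m tensor_prod n F)" "b < dim_col (c \<cdot>\<^sub>m tensor_prod n F)"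
  then have a: "a < 2 ^ n" and b: "b < 2 ^ n" by auto
  have "(\<Prod>j<n. (F(i := c \<cdot>\<^sub>m F i)) j $$ (qbit a j, qbit b j))
      = (\<Prod>j<n. (if j = i then c else 1) * F j $$ (qbit a j, qbit b j))"
    using assms(2) by (intro prod.cong refl) auto
  then show "tensor_prod n (F(i := c \<cdot>\<^sub>m F i)) $$ (a, b) = (c \<cdot>\<^sub>m tensor_prod n F) $$ (a, b)"
    using a b assms(1) by (simp add: prod.distrib prod.delta)
qed auto

lemma pauli_mat_carrier [simp]: "pauli_mat P \<in> carrier_mat 2 2"
  by (cases P) (auto simp: pauli_mat_def mat_of_rows_list_def)

lemma pauli_tensor_eq_tensor_prod: "pauli_tensor n tau = tensor_prod n (\<lambda>i. pauli_mat (tau i))"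
  by (simp add: pauli_tensor_def tensor_prod_def)

lemma pauli_tensor_carrier [simp]: "pauli_tensor n tau \<in> carrier_mat (2 ^ n) (2 ^ n)"
  by (simp add: pauli_tensor_eq_tensor_prod)

lemma pauli_at_carrier [simp]: "pauli_at n i P \<in> carrier_mat (2 ^ n) (2 ^ n)"
  by (simp add: pauli_at_def)

definition comm_sign :: "pauli \<Rightarrow> pauli \<Rightarrow> complex" where
  "comm_sign P Q = (if P = PI \<or> Q = PI \<or> P = Q then 1 else -1)"

lemma pauli_mat_conj: "pauli_mat P * pauli_mat Q * pauli_mat P = comm_sign P Q \<cdot>\<^sub>m pauli_mat Q"
proof (rule eq_matI)
  fix x y
  assume "x < dim_row (comm_sign P Q \<cdot>\<^sub>m pauli_mat Q)" "y < dim_col (comm_sign P Q \<cdot>\<^sub>m pauli_mat Q)"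
  then have "x = 0 \<or> x = 1" "y = 0 \<or> y = 1"
    using pauli_mat_carrier[of Q] by auto
  then show "(pauli_mat P * pauli_mat Q * pauli_mat P) $$ (x, y) = (comm_sign P Q \<cdot>\<^sub>m pauli_mat Q) $$ (x, y)"
    by (cases P; cases Q)
      (auto simp: pauli_mat_def mat_of_rows_list_def scalar_prod_def comm_sign_def numeral_2_eq_2)
qed (simp_all add: carrier_matD[OF pauli_mat_carrier])

lemma less_2_cases: "x < 2 \<Longrightarrow> x = 0 \<or> x = Suc 0"
  by auto

lemma index_pauli_mat:
  assumes "x < 2" "y < 2"
  shows "pauli_mat PI $$ (x, y) = of_bool (x = y)"
    and "pauli_mat PX $$ (x, y) = of_bool (x \<noteq> y)"
    and "pauli_mat PZ $$ (x, y) = of_bool (x = y) * (-1) ^ x"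
  using less_2_cases[OF assms(1)] less_2_cases[OF assms(2)]
  by (auto simp: pauli_mat_def mat_of_rows_list_def)

lemma pauli_at_conj_pauli_tensor:
  assumes "i < n"
  shows "pauli_at n i P * pauli_tensor n tau * pauli_at n i P = comm_sign P (tau i) \<cdot>\<^sub>m pauli_tensor n tau"
proof -
  let ?F = "\<lambda>j. pauli_mat (tau j)"
  let ?P = "\<lambda>j. pauli_mat (if j = i then P else PI)"
  have "pauli_at n i P * pauli_tensor n tau * pauli_at n i P = tensor_prod n (\<lambda>j. ?P j * ?F j * ?P j)"
    unfolding pauli_at_def pauli_tensor_eq_tensor_prod
    by (simp add: tensor_prod_mult mult_carrier_mat[OF pauli_mat_carrier pauli_mat_carrier])
  also have "(\<lambda>j. ?P j * ?F j * ?P j) = ?F(i := comm_sign P (tau i) \<cdot>\<^sub>m ?F i)"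
  proof
    have "1 \<cdot>\<^sub>m pauli_mat Q = pauli_mat Q" for Q
      by (rule eq_matI) auto
    then show "?P j * ?F j * ?P j = (?F(i := comm_sign P (tau i) \<cdot>\<^sub>m ?F i)) j" for j
      by (simp add: pauli_mat_conj comm_sign_def)
  qed
  also have "tensor_prod n (?F(i := comm_sign P (tau i) \<cdot>\<^sub>m ?F i)) = comm_sign P (tau i) \<cdot>\<^sub>m tensor_prod n ?F"
    using assms by (intro tensor_prod_smult_factor) auto
  finally show ?thesis
    by (simp add: pauli_tensor_eq_tensor_prod)
qed

section \<open>Traces against Pauli strings under depolarizing noise\<close>

lemma mat_trace_mult_comm:
  assumes "A \<in> carrier_mat m k" "B \<in> carrier_mat k m"
  shows "mat_trace (A * B) = mat_trace (B * A)"
proof -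
  have "mat_trace (A * B) = (\<Sum>i<m. \<Sum>j<k. A $$ (i, j) * B $$ (j, i))"
    using assms by (simp add: mat_trace_def scalar_prod_def lessThan_atLeast0)
  also have "\<dots> = (\<Sum>j<k. \<Sum>i<m. B $$ (j, i) * A $$ (i, j))"
    by (subst sum.swap) (simp add: mult.commute)
  also have "\<dots> = mat_trace (B * A)"
    using assms by (simp add: mat_trace_def scalar_prod_def lessThan_atLeast0)
  finally show ?thesis .
qed

lemma mat_trace_add:
  "A \<in> carrier_mat m m \<Longrightarrow> B \<in> carrier_mat m m \<Longrightarrow> mat_trace (A + B) = mat_trace A + mat_trace B"
  by (simp add: mat_trace_def sum.distrib)

lemma mat_trace_smult: "A \<in> carrier_mat m m \<Longrightarrow> mat_trace (c \<cdot>\<^sub>m A) = c * mat_trace A"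
  by (simp add: mat_trace_def sum_distrib_left)

lemma mat_trace_mult_smult:
  "A \<in> carrier_mat m k \<Longrightarrow> B \<in> carrier_mat k m \<Longrightarrow> mat_trace (A * (c \<cdot>\<^sub>m B)) = c * mat_trace (A * B)"
  by (simp add: mult_smult_distrib mat_trace_smult[of _ m] mult_carrier_mat)

lemma mat_trace_outer_product_mult:
  assumes "v \<in> carrier_vec m" "S \<in> carrier_mat m m"
  shows "mat_trace (mat m m (\<lambda>(a, b). v $ a * cnj (v $ b)) * S) = (\<Sum>b<m. cnj (v $ b) * (S *\<^sub>v v) $ b)"
proof -
  have "mat_trace (mat m m (\<lambda>(a, b). v $ a * cnj (v $ b)) * S) = (\<Sum>a<m. \<Sum>b<m. v $ a * cnj (v $ b) * S $$ (b, a))"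
    using assms by (auto simp: mat_trace_def scalar_prod_def lessThan_atLeast0 intro!: sum.cong)
  also have "\<dots> = (\<Sum>b<m. cnj (v $ b) * (\<Sum>a<m. S $$ (b, a) * v $ a))"
    by (subst sum.swap) (simp add: sum_distrib_left mult_ac)
  also have "\<dots> = (\<Sum>b<m. cnj (v $ b) * (S *\<^sub>v v) $ b)"
    using assms by (auto simp: scalar_prod_def lessThan_atLeast0 intro!: sum.cong)
  finally show ?thesis .
qed

lemma mat_trace_conj_pauli_at:
  assumes "i < n" "M \<in> carrier_mat (2 ^ n) (2 ^ n)"
  shows "mat_trace (pauli_at n i P * M * pauli_at n i P * pauli_tensor n tau)
       = comm_sign P (tau i) * mat_trace (M * pauli_tensor n tau)"
proof -
  let ?P = "pauli_at n i P" and ?T = "pauli_tensor n tau"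
  have carriers: "?P \<in> carrier_mat (2 ^ n) (2 ^ n)" "?T \<in> carrier_mat (2 ^ n) (2 ^ n)"
    by simp_all
  have PM: "?P * M \<in> carrier_mat (2 ^ n) (2 ^ n)" and PT: "?P * ?T \<in> carrier_mat (2 ^ n) (2 ^ n)"
    using mult_carrier_mat[OF carriers(1) assms(2)] mult_carrier_mat[OF carriers] by simp_all
  have "?P * M * ?P * ?T = (?P * M) * (?P * ?T)"
    by (rule assoc_mult_mat[of _ "2 ^ n" "2 ^ n" _ "2 ^ n" _ "2 ^ n"]) (use PM in simp_all)
  then have "mat_trace (?P * M * ?P * ?T) = mat_trace ((?P * ?T) * (?P * M))"
    using mat_trace_mult_comm[OF PM PT] by simp
  also have "(?P * ?T) * (?P * M) = (?P * ?T * ?P) * M"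
    by (rule assoc_mult_mat[symmetric, of _ "2 ^ n" "2 ^ n" _ "2 ^ n" _ "2 ^ n"]) (use PT assms(2) in simp_all)
  also have "mat_trace ((?P * ?T * ?P) * M) = comm_sign P (tau i) * mat_trace (?T * M)"
    using assms mult_carrier_mat[OF carriers(2) assms(2)]
    by (simp add: pauli_at_conj_pauli_tensor mult_smult_assoc_mat[of _ "2 ^ n" "2 ^ n"]
        mat_trace_smult[of _ "2 ^ n"] mult_carrier_mat)
  also have "mat_trace (?T * M) = mat_trace (M * ?T)"
    using assms(2) by (simp add: mat_trace_mult_comm[of _ "2 ^ n" "2 ^ n"])
  finally show ?thesis .
qed

definition depol_eigenvalue :: "real \<Rightarrow> pauli \<Rightarrow> real" where
  "depol_eigenvalue p Q = (if Q = PI then 1 else 1 - 4 / 3 * p)"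

lemma depol_qubit_carrier [simp]:
  "M \<in> carrier_mat (2 ^ n) (2 ^ n) \<Longrightarrow> depol_qubit n p i M \<in> carrier_mat (2 ^ n) (2 ^ n)"
  unfolding depol_qubit_def by (intro add_carrier_mat smult_carrier_mat mult_carrier_mat) auto

lemma mat_trace_depol_qubit_pauli_tensor:
  assumes "i < n" "M \<in> carrier_mat (2 ^ n) (2 ^ n)"
  shows "mat_trace (depol_qubit n p i M * pauli_tensor n tau)
       = depol_eigenvalue p (tau i) * mat_trace (M * pauli_tensor n tau)"
proof -
  let ?T = "pauli_tensor n tau"
  have T: "?T \<in> carrier_mat (2 ^ n) (2 ^ n)"
    by simp
  define C where "C Q = pauli_at n i Q * M * pauli_at n i Q" for Q
  have C: "C Q \<in> carrier_mat (2 ^ n) (2 ^ n)" for Q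
    unfolding C_def using assms(2) by (intro mult_carrier_mat) auto
  have CT: "C Q * ?T \<in> carrier_mat (2 ^ n) (2 ^ n)" for Q
    using mult_carrier_mat[OF C T] .
  have "depol_qubit n p i M * ?T
      = complex_of_real (1 - p) \<cdot>\<^sub>m (M * ?T) + complex_of_real (p / 3) \<cdot>\<^sub>m (C PX * ?T + C PY * ?T + C PZ * ?T)"
    unfolding depol_qubit_def C_def[symmetric] using C CT T assms(2)
    by (simp add: add_mult_distrib_mat[where nr = "2 ^ n" and n = "2 ^ n" and nc = "2 ^ n"]
        mult_smult_assoc_mat[where nr = "2 ^ n" and n = "2 ^ n" and nc = "2 ^ n"]
        add_carrier_mat assoc_add_mat[of _ "2 ^ n" "2 ^ n"])
  then have "mat_trace (depol_qubit n p i M * ?T) = complex_of_real (1 - p) * mat_trace (M * ?T)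
      + complex_of_real (p / 3) * (mat_trace (C PX * ?T) + mat_trace (C PY * ?T) + mat_trace (C PZ * ?T))"
    using CT mult_carrier_mat[OF assms(2) T]
    by (simp add: mat_trace_add[of _ "2 ^ n"] mat_trace_smult[of _ "2 ^ n"] add_carrier_mat)
  then show ?thesis
    unfolding C_def using assms
    by (cases "tau i") (auto simp: mat_trace_conj_pauli_at comm_sign_def depol_eigenvalue_def algebra_simps)
qed

lemma foldr_depol_qubit_carrier:
  "M \<in> carrier_mat (2 ^ n) (2 ^ n) \<Longrightarrow> foldr (depol_qubit n p) is M \<in> carrier_mat (2 ^ n) (2 ^ n)"
  by (induction "is") auto

lemma mat_trace_foldr_depol_qubit_pauli_tensor:
  assumes "set is \<subseteq> {..<n}" "M \<in> carrier_mat (2 ^ n) (2 ^ n)"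
  shows "mat_trace (foldr (depol_qubit n p) is M * pauli_tensor n tau)
       = (\<Prod>i\<leftarrow>is. depol_eigenvalue p (tau i)) * mat_trace (M * pauli_tensor n tau)"
  using assms(1)
  by (induction "is")
    (simp_all add: mat_trace_depol_qubit_pauli_tensor foldr_depol_qubit_carrier[OF assms(2)])

lemma mat_trace_depol_all_pauli_tensor:
  assumes "M \<in> carrier_mat (2 ^ n) (2 ^ n)"
  shows "mat_trace (depol_all n p M * pauli_tensor n tau)
       = complex_of_real ((1 - 4 / 3 * p) ^ card {i. i < n \<and> tau i \<noteq> PI}) * mat_trace (M * pauli_tensor n tau)"
proof -
  have "(\<Prod>i\<leftarrow>[0..<n]. depol_eigenvalue p (tau i)) = (\<Prod>i<n. depol_eigenvalue p (tau i))"
    by (simp add: prod.distinct_set_conv_list[symmetric] lessThan_atLeast0)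
  also have "\<dots> = (\<Prod>i\<in>{i. i < n \<and> tau i \<noteq> PI}. 1 - 4 / 3 * p)"
    unfolding depol_eigenvalue_def by (rule prod.mono_neutral_cong_right) auto
  finally show ?thesis
    unfolding depol_all_def using assms
    by (simp add: mat_trace_foldr_depol_qubit_pauli_tensor lessThan_atLeast0)
qed

section \<open>The graph state and its stabilizers\<close>

lemma cz_carrier [simp]: "cz n i j \<in> carrier_mat (2 ^ n) (2 ^ n)"
  by (simp add: cz_def)

lemma index_cz_mult_vec:
  assumes "v \<in> carrier_vec (2 ^ n)" "a < 2 ^ n"
  shows "(cz n i j *\<^sub>v v) $ a = (-1) ^ (qbit a i * qbit a j) * v $ a"
proof -
  have "(cz n i j *\<^sub>v v) $ a = (\<Sum>b<2 ^ n. cz n i j $$ (a, b) * v $ b)"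
    using assms carrier_matD[OF cz_carrier[of n i j]] by (auto simp: scalar_prod_def lessThan_atLeast0)
  also have "\<dots> = (\<Sum>b<2 ^ n. if b = a then (-1) ^ (qbit a i * qbit a j) * v $ b else 0)"
    using assms(2) qbit_cases[of a i] qbit_cases[of a j] by (intro sum.cong refl) (auto simp: cz_def)
  finally show ?thesis
    using assms(2) by simp
qed

definition graph_edge_set :: "nat \<Rightarrow> (nat \<Rightarrow> nat \<Rightarrow> bool) \<Rightarrow> (nat \<times> nat) set" where
  "graph_edge_set n E = {(u, w). u < w \<and> w < n \<and> E u w}"

lemma finite_graph_edge_set [simp]: "finite (graph_edge_set n E)"
  by (rule finite_subset[of _ "{..<n} \<times> {..<n}"]) (auto simp: graph_edge_set_def)

lemma set_graph_edges: "set (graph_edges n E) = graph_edge_set n E"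
  by (auto simp: graph_edges_def graph_edge_set_def)

lemma distinct_graph_edges: "distinct (graph_edges n E)"
proof (induction n)
  case 0
  then show ?case by (simp add: graph_edges_def)
next
  case (Suc n)
  have "graph_edges (Suc n) E = graph_edges n E @ map (\<lambda>i. (i, n)) (filter (\<lambda>i. E i n) [0..<n])"
  proof -
    have "concat (map (\<lambda>i. if E i n then [(i, n)] else []) is) = map (\<lambda>i. (i, n)) (filter (\<lambda>i. E i n) is)"
      for "is" by (induction "is") auto
    then show ?thesis
      by (simp add: graph_edges_def)
  qed
  then show ?case
    using Suc by (auto simp: distinct_map inj_on_def set_graph_edges graph_edge_set_def)
qed

definition graph_sign :: "nat \<Rightarrow> (nat \<Rightarrow> nat \<Rightarrow> bool) \<Rightarrow> nat \<Rightarrow> complex" where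
  "graph_sign n E a = (\<Prod>(u, w)\<in>graph_edge_set n E. (-1) ^ (qbit a u * qbit a w))"

lemma graph_state_carrier [simp]: "graph_state n E \<in> carrier_vec (2 ^ n)"
  and index_graph_state:
    "a < 2 ^ n \<Longrightarrow> graph_state n E $ a = complex_of_real (1 / sqrt (2 ^ n)) * graph_sign n E a"
proof -
  let ?f = "\<lambda>(i, j) v. cz n i j *\<^sub>v v"
  have foldr_cz: "foldr ?f es (plus_state n) \<in> carrier_vec (2 ^ n) \<and>
    (\<forall>a < 2 ^ n. foldr ?f es (plus_state n) $ a
       = complex_of_real (1 / sqrt (2 ^ n)) * (\<Prod>(u, w)\<leftarrow>es. (-1) ^ (qbit a u * qbit a w)))" for es
  proof (induction es)
    case Nil
    then show ?case by (simp add: plus_state_def)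
  next
    case (Cons e es)
    obtain i j where e: "e = (i, j)"
      by fastforce
    let ?v = "foldr ?f es (plus_state n)"
    have "?v \<in> carrier_vec (2 ^ n)"
      using Cons by blast
    then show ?case
      using Cons mult_mat_vec_carrier[OF cz_carrier]
      by (simp add: e index_cz_mult_vec mult_ac del: index_mult_mat_vec)
  qed
  then show "graph_state n E \<in> carrier_vec (2 ^ n)"
    unfolding graph_state_def by blast
  show "graph_state n E $ a = complex_of_real (1 / sqrt (2 ^ n)) * graph_sign n E a" if "a < 2 ^ n"
    using foldr_cz[of "graph_edges n E"] that
    unfolding graph_state_def graph_sign_def set_graph_edges[symmetric]
    by (simp add: prod.distinct_set_conv_list[OF distinct_graph_edges])
qed

lemma dim_vec_graph_state [simp]: "dim_vec (graph_state n E) = 2 ^ n"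
  by (rule carrier_vecD[OF graph_state_carrier])

lemma prod_graph_edge_set_incident:
  fixes f :: "nat \<Rightarrow> 'a::comm_monoid_mult"
  assumes "simple_graph n E" "i < n"
  shows "(\<Prod>(u, w)\<in>graph_edge_set n E. (if u = i then f w else 1) * (if w = i then f u else 1))
       = (\<Prod>j | j < n \<and> E i j. f j)"
proof -
  let ?g = "\<lambda>(u, w). (if u = i then f w else 1) * (if w = i then f u else 1)"
  let ?incident = "{e \<in> graph_edge_set n E. fst e = i \<or> snd e = i}"
  \<comment> \<open>each edge is stored once, as (smaller endpoint, larger endpoint)\<close>
  let ?edge = "\<lambda>j. if j < i then (j, i) else (i, j)"
  have E: "E u w \<Longrightarrow> E w u \<and> u \<noteq> w \<and> u < n \<and> w < n" for u w
    using assms(1) unfolding simple_graph_def by blast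
  have "(\<Prod>e\<in>graph_edge_set n E. ?g e) = (\<Prod>e\<in>?incident. ?g e)"
    by (rule prod.mono_neutral_right) (auto split: if_splits)
  also have "\<dots> = (\<Prod>j | j < n \<and> E i j. ?g (?edge j))"
  proof (rule prod.reindex_bij_betw[symmetric])
    show "bij_betw ?edge {j. j < n \<and> E i j} ?incident"
    proof (rule bij_betwI[where g = "\<lambda>(u, w). if u = i then w else u"])
      show "?edge \<in> {j. j < n \<and> E i j} \<rightarrow> ?incident"
        using E by (fastforce simp: graph_edge_set_def nat_neq_iff split: if_splits)
      show "(\<lambda>(u, w). if u = i then w else u) \<in> ?incident \<rightarrow> {j. j < n \<and> E i j}"
        using E by (auto simp: graph_edge_set_def)
    qed (use E in \<open>auto simp: graph_edge_set_def\<close>)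
  qed
  also have "\<dots> = (\<Prod>j | j < n \<and> E i j. f j)"
    using E by (intro prod.cong) auto
  finally show ?thesis .
qed

lemma graph_sign_flip_bit:
  assumes "simple_graph n E" "i < n"
  shows "graph_sign n E (flip_bit i a) = graph_sign n E a * (\<Prod>j | j < n \<and> E i j. (-1) ^ qbit a j)"
proof -
  let ?h = "\<lambda>(u, w). (if u = i then (-1) ^ qbit a w else 1) * (if w = i then (-1::complex) ^ qbit a u else 1)"
  have "(-1) ^ (qbit (flip_bit i a) u * qbit (flip_bit i a) w) = (-1) ^ (qbit a u * qbit a w) * ?h (u, w)"
    if "(u, w) \<in> graph_edge_set n E" for u w
    using that qbit_cases[of a u] qbit_cases[of a w] qbit_cases[of a i]
    by (auto simp: qbit_flip_bit graph_edge_set_def)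
  then have "graph_sign n E (flip_bit i a) = graph_sign n E a * (\<Prod>e\<in>graph_edge_set n E. ?h e)"
    unfolding graph_sign_def prod.distrib[symmetric] by (intro prod.cong) auto
  also have "(\<Prod>e\<in>graph_edge_set n E. ?h e) = (\<Prod>j | j < n \<and> E i j. (-1) ^ qbit a j)"
    by (rule prod_graph_edge_set_incident[OF assms])
  finally show ?thesis .
qed

lemma stab_gen_carrier [simp]: "stab_gen n E i \<in> carrier_mat (2 ^ n) (2 ^ n)"
  by (simp add: stab_gen_def)

lemma index_stab_gen:
  assumes "simple_graph n E" "i < n" "a < 2 ^ n" "b < 2 ^ n"
  shows "stab_gen n E i $$ (a, b)
       = (if b = flip_bit i a then (\<Prod>j | j < n \<and> E i j. (-1) ^ qbit a j) else 0)"
proof -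
  let ?a' = "flip_bit i a"
  have "\<not> E i i"
    using assms(1) unfolding simple_graph_def by blast
  then have factor: "pauli_mat (if j = i then PX else if E i j then PZ else PI) $$ (qbit a j, qbit b j)
      = (if qbit b j = qbit ?a' j then (if E i j then (-1) ^ qbit a j else 1) else 0)" for j
    using qbit_cases[of a j] qbit_cases[of b j] by (auto simp: index_pauli_mat qbit_flip_bit)
  have entry: "stab_gen n E i $$ (a, b)
      = (\<Prod>j<n. if qbit b j = qbit ?a' j then (if E i j then (-1) ^ qbit a j else 1) else 0)"
    using assms(3,4) by (simp add: stab_gen_def pauli_tensor_eq_tensor_prod factor)
  show ?thesis
  proof (cases "b = ?a'")
    case True
    then show ?thesis
      unfolding entry using assms(1) by (simp add: prod.inter_filter[symmetric] simple_graph_def)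
  next
    case False
    then obtain j where "j < n" "qbit b j \<noteq> qbit ?a' j"
      using eq_if_qbits_eq[OF assms(4) flip_bit_less_power[OF assms(2,3)]] by blast
    then show ?thesis
      unfolding entry using False by (auto intro!: prod_zero bexI[of _ j])
  qed
qed

lemma stab_gen_mult_graph_state:
  assumes "simple_graph n E" "i < n"
  shows "stab_gen n E i *\<^sub>v graph_state n E = graph_state n E"
proof (rule eq_vecI)
  let ?G = "graph_state n E" and ?Z = "\<lambda>a. \<Prod>j | j < n \<and> E i j. (-1::complex) ^ qbit a j"
  fix a
  assume "a < dim_vec ?G"
  then have a: "a < 2 ^ n"
    by simp
  have a': "flip_bit i a < 2 ^ n"
    by (rule flip_bit_less_power[OF assms(2) a])
  have "(stab_gen n E i *\<^sub>v ?G) $ a = (\<Sum>b<2 ^ n. stab_gen n E i $$ (a, b) * ?G $ b)"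
    using a carrier_matD[OF stab_gen_carrier] by (simp add: scalar_prod_def lessThan_atLeast0)
  also have "\<dots> = (\<Sum>b<2 ^ n. if b = flip_bit i a then ?Z a * ?G $ b else 0)"
    by (intro sum.cong refl) (simp add: index_stab_gen[OF assms a])
  also have "\<dots> = ?Z a * ?G $ flip_bit i a"
    using a' by simp
  also have "\<dots> = (?Z a * ?Z a) * ?G $ a"
    using a a' by (simp add: index_graph_state graph_sign_flip_bit[OF assms] mult_ac)
  also have "?Z a * ?Z a = 1"
    by (simp add: prod.distrib[symmetric])
  finally show "(stab_gen n E i *\<^sub>v ?G) $ a = ?G $ a"
    by simp
qed (simp add: carrier_matD[OF stab_gen_carrier])

lemma stabilizer_carrier: "stabilizer n E l \<in> carrier_mat (2 ^ n) (2 ^ n)"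
  and stabilizer_mult_graph_state:
    "simple_graph n E \<Longrightarrow> stabilizer n E l *\<^sub>v graph_state n E = graph_state n E"
proof -
  let ?g = "\<lambda>i. if l i then stab_gen n E i else 1\<^sub>m (2 ^ n)"
  let ?S = "\<lambda>is. foldr (\<lambda>i M. ?g i * M) is (1\<^sub>m (2 ^ n))"
  have carrier: "?S is \<in> carrier_mat (2 ^ n) (2 ^ n)" for "is"
    by (induction "is") (auto simp: mult_carrier_mat[of _ "2 ^ n" "2 ^ n"])
  then show "stabilizer n E l \<in> carrier_mat (2 ^ n) (2 ^ n)"
    unfolding stabilizer_def .
  assume E: "simple_graph n E"
  have "?S is *\<^sub>v graph_state n E = graph_state n E" if "set is \<subseteq> {..<n}" for "is"
    using that
  proof (induction "is")
    case Nil
    then show ?case by simp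
  next
    case (Cons i "is")
    have "?S (i # is) *\<^sub>v graph_state n E = ?g i *\<^sub>v (?S is *\<^sub>v graph_state n E)"
      unfolding foldr_Cons o_apply
      by (rule assoc_mult_mat_vec[of _ "2 ^ n" "2 ^ n" _ "2 ^ n"]) (simp_all add: carrier)
    then show ?case
      using Cons stab_gen_mult_graph_state[OF E] by simp
  qed
  then show "stabilizer n E l *\<^sub>v graph_state n E = graph_state n E"
    unfolding stabilizer_def by (simp add: lessThan_atLeast0)
qed

lemma graph_state_normalized: "(\<Sum>a<2 ^ n. cnj (graph_state n E $ a) * graph_state n E $ a) = 1"
proof -
  have "cnj (graph_sign n E a) * graph_sign n E a = 1" for a
    by (simp add: graph_sign_def case_prod_beta prod.distrib[symmetric] flip: power_mult_distrib)
  then have "cnj (graph_state n E $ a) * graph_state n E $ a = 1 / 2 ^ n" if "a < 2 ^ n" for a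
    using that by (simp add: index_graph_state power_divide flip: of_real_mult)
  then show ?thesis
    by simp
qed

lemma graph_density_carrier: "graph_density n E \<in> carrier_mat (2 ^ n) (2 ^ n)"
  by (simp add: graph_density_def Let_def)

lemma mat_trace_graph_density_mult_stabilizer:
  assumes "simple_graph n E"
  shows "mat_trace (graph_density n E * stabilizer n E l) = 1"
  using mat_trace_outer_product_mult[OF graph_state_carrier stabilizer_carrier]
  by (simp add: graph_density_def Let_def stabilizer_mult_graph_state[OF assms] graph_state_normalized)

lemma mat_trace_depol_all_graph_density_mult_weight_stabilizer:
  assumes "simple_graph n E" "S \<in> weight_stabilizers n E w"
  shows "mat_trace (depol_all n p (graph_density n E) * S) = complex_of_real ((1 - 4 / 3 * p) ^ w)"
proof -
  let ?rho = "graph_density n E"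
  obtain l where l: "S = stabilizer n E l"
    using assms(2) unfolding weight_stabilizers_def by blast
  obtain s :: nat and tau where S: "S = (-1) ^ s \<cdot>\<^sub>m pauli_tensor n tau"
    and w: "card {i. i < n \<and> tau i \<noteq> PI} = w"
    using assms(2) unfolding weight_stabilizers_def by blast
  have D: "depol_all n p ?rho \<in> carrier_mat (2 ^ n) (2 ^ n)"
    unfolding depol_all_def by (rule foldr_depol_qubit_carrier[OF graph_density_carrier])
  have "mat_trace (depol_all n p ?rho * S) = (-1) ^ s * mat_trace (depol_all n p ?rho * pauli_tensor n tau)"
    unfolding S using D by (simp add: mat_trace_mult_smult)
  also have "\<dots> = complex_of_real ((1 - 4 / 3 * p) ^ w) * ((-1) ^ s * mat_trace (?rho * pauli_tensor n tau))"
    using w by (simp add: mat_trace_depol_all_pauli_tensor[OF graph_density_carrier])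
  also have "(-1) ^ s * mat_trace (?rho * pauli_tensor n tau) = mat_trace (?rho * S)"
    unfolding S by (simp add: mat_trace_mult_smult[OF graph_density_carrier])
  also have "\<dots> = 1"
    unfolding l by (rule mat_trace_graph_density_mult_stabilizer[OF assms(1)])
  finally show ?thesis
    by simp
qed

section \<open>The fidelity estimate\<close>

lemma power_diff_le_mult:
  fixes x y :: "'a::linordered_idom"
  assumes "0 \<le> y" "y \<le> x"
  shows "x ^ Suc m - y ^ Suc m \<le> of_nat (Suc m) * x ^ m * (x - y)"
proof (induction m)
  case 0
  then show ?case by simp
next
  case (Suc m)
  have "x ^ Suc (Suc m) - y ^ Suc (Suc m) = x * (x ^ Suc m - y ^ Suc m) + y ^ Suc m * (x - y)"
    by (simp add: algebra_simps)
  also have "\<dots> \<le> x * (of_nat (Suc m) * x ^ m * (x - y)) + x ^ Suc m * (x - y)"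
    using Suc assms by (intro add_mono mult_left_mono mult_right_mono power_mono) auto
  also have "\<dots> = of_nat (Suc (Suc m)) * x ^ Suc m * (x - y)"
    by (simp add: algebra_simps)
  finally show ?case .
qed

lemma one_minus_power_4_minus_power_3_bounds:
  fixes p :: real
  assumes "0 \<le> p" "p \<le> 3 / 4"
  shows "0 \<le> (1 - 4 / 3 * p) ^ 3" "(1 - 4 / 3 * p) ^ 3 \<le> (1 - p) ^ 4"
    and "(1 - p) ^ 4 - (1 - 4 / 3 * p) ^ 3 \<le> 2 / 3 * p\<^sup>2"
proof -
  have diff: "(1 - p) ^ 4 - (1 - 4 / 3 * p) ^ 3 = p\<^sup>2 * ((p - 22 / 27)\<^sup>2 + 2 / 729)"
    by (simp add: field_simps power2_eq_square power3_eq_cube power4_eq_xxxx)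
  show "0 \<le> (1 - 4 / 3 * p) ^ 3"
    using assms by simp
  have "0 \<le> p\<^sup>2 * ((p - 22 / 27)\<^sup>2 + 2 / 729)"
    by simp
  then show "(1 - 4 / 3 * p) ^ 3 \<le> (1 - p) ^ 4"
    unfolding diff[symmetric] by linarith
  have "p * p \<le> 1 * p"
    using assms by (intro mult_right_mono) auto
  then have "(p - 22 / 27)\<^sup>2 + 2 / 729 \<le> 2 / 3"
    using assms by (simp add: power2_eq_square algebra_simps)
  then have "p\<^sup>2 * ((p - 22 / 27)\<^sup>2 + 2 / 729) \<le> p\<^sup>2 * (2 / 3)"
    by (rule mult_left_mono) simp
  then show "(1 - p) ^ 4 - (1 - 4 / 3 * p) ^ 3 \<le> 2 / 3 * p\<^sup>2"
    unfolding diff by (simp add: mult.commute)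
qed

lemma square_mult_exp_neg_lt_1:
  fixes p :: real
  assumes "0 \<le> p" "p \<le> 3 / 4" "k \<ge> 1"
  shows "(real k * p)\<^sup>2 * exp (- 4 * p * (real k - 1)) < 1"
proof (cases "k = 1")
  case True
  have "p * p \<le> 3 / 4 * (3 / 4)"
    using assms by (intro mult_mono) auto
  then show ?thesis
    using True by (simp add: power2_eq_square)
next
  case False
  define z where "z = 4 * p * (real k - 1)"
  have "0 \<le> z"
    unfolding z_def using assms by simp
  have "real k * p \<le> z / 2"
  proof -
    have "real k \<le> 2 * (real k - 1)"
      using assms(3) False by simp
    then have "real k * p \<le> 2 * (real k - 1) * p"
      using assms(1) by (rule mult_right_mono)
    then show ?thesis
      unfolding z_def by (simp add: algebra_simps)
  qed
  then have "(real k * p)\<^sup>2 \<le> (z / 2)\<^sup>2"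
    using assms by (intro power_mono) auto
  also have "\<dots> = z\<^sup>2 / 4"
    by (simp add: power_divide)
  also have "\<dots> < exp z / 2"
    using exp_lower_Taylor_quadratic[OF \<open>0 \<le> z\<close>] \<open>0 \<le> z\<close> by linarith
  finally have "(real k * p)\<^sup>2 * exp (- z) < exp z / 2 * exp (- z)"
    by (intro mult_strict_right_mono) auto
  also have "exp z / 2 * exp (- z) = 1 / 2"
    by (simp add: exp_minus)
  finally show ?thesis
    unfolding z_def by simp
qed

lemma depolarized_fidelity_gap_bounds:
  fixes p :: real
  assumes "0 \<le> p" "p \<le> 3 / 4" "k \<ge> 1"
  shows "0 \<le> (1 - p) ^ (4 * k) - (1 - 4 / 3 * p) ^ (3 * k)"
    and "(1 - p) ^ (4 * k) - (1 - 4 / 3 * p) ^ (3 * k) < 2 / (3 * real k)"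
proof -
  define x y where "x = (1 - p) ^ 4" and "y = (1 - 4 / 3 * p) ^ 3"
  have powers: "(1 - p) ^ (4 * k) = x ^ k" "(1 - 4 / 3 * p) ^ (3 * k) = y ^ k"
    unfolding x_def y_def by (simp_all add: power_mult)
  have "0 \<le> y" "y \<le> x" "x - y \<le> 2 / 3 * p\<^sup>2"
    unfolding x_def y_def using one_minus_power_4_minus_power_3_bounds[OF assms(1,2)] by simp_all
  then show "0 \<le> (1 - p) ^ (4 * k) - (1 - 4 / 3 * p) ^ (3 * k)"
    unfolding powers using power_mono by simp
  obtain m where k: "k = Suc m"
    using assms(3) by (cases k) auto
  have "x \<le> exp (- p) ^ 4"
    unfolding x_def using assms(1,2) exp_ge_add_one_self[of "- p"] by (intro power_mono) auto
  then have "x ^ m \<le> (exp (- p) ^ 4) ^ m"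
    by (intro power_mono) (simp_all add: x_def)
  also have "\<dots> = exp (- 4 * p * (real k - 1))"
    unfolding k by (simp flip: exp_of_nat_mult power_mult add: mult_ac)
  finally have x_power_le: "x ^ m \<le> exp (- 4 * p * (real k - 1))" .
  have "x ^ k - y ^ k \<le> real k * x ^ m * (x - y)"
    unfolding k using power_diff_le_mult[OF \<open>0 \<le> y\<close> \<open>y \<le> x\<close>] by simp
  also have "\<dots> \<le> real k * exp (- 4 * p * (real k - 1)) * (2 / 3 * p\<^sup>2)"
    using x_power_le \<open>x - y \<le> _\<close> \<open>y \<le> x\<close> by (intro mult_mono mult_left_mono) auto
  also have "\<dots> = 2 / (3 * real k) * ((real k * p)\<^sup>2 * exp (- 4 * p * (real k - 1)))"
    using assms(3) by (simp add: field_simps power2_eq_square)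
  also have "\<dots> < 2 / (3 * real k)"
    using mult_strict_left_mono[OF square_mult_exp_neg_lt_1[OF assms], of "2 / (3 * real k)"] assms(3)
    by simp
  finally show "(1 - p) ^ (4 * k) - (1 - 4 / 3 * p) ^ (3 * k) < 2 / (3 * real k)"
    unfolding powers .
qed

theorem theorem1:
  fixes k :: nat and E :: "nat \<Rightarrow> nat \<Rightarrow> bool"
  assumes "k \<ge> 1"
    and "simple_graph (4 * k) E"
    and "no_isolated_vertices (4 * k) E"
    and "weight_stabilizers (4 * k) E (3 * k) \<noteq> {}"
  shows "\<forall>S \<in> weight_stabilizers (4 * k) E (3 * k). \<forall>p::real. 0 \<le> p \<and> p \<le> 1 \<longrightarrow>
           mat_trace (depol_all (4 * k) p (graph_density (4 * k) E) * S)
             = complex_of_real ((1 - 4 / 3 * p) ^ (3 * k))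
           \<and> (p \<le> 3 / 4 \<longrightarrow>
                0 \<le> (1 - p) ^ (4 * k) - (1 - 4 / 3 * p) ^ (3 * k)
                \<and> (1 - p) ^ (4 * k) - (1 - 4 / 3 * p) ^ (3 * k) < 2 / (3 * real k))"
  using mat_trace_depol_all_graph_density_mult_weight_stabilizer[OF assms(2)]
    depolarized_fidelity_gap_bounds[OF _ _ assms(1)]
  by auto

end
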